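(* Let $k\ge1$, $t\ge 0$ and $n\ge kt$ be integers. Then $S(n,t,k)=k^t$. Moreover, if $F$ is a $t$-admissible $k$-CNF formula on $n$ variables with $|\mathrm{sat}_t(F)|=k^t$, then $F$ contains $t$ pairwise variable-disjoint clauses each of the form $(x_{i_1}\lor\dots\lor x_{i_k})$, i.e. consisting of $k$ distinct un-negated variables.
   Context: A $k$-CNF formula is a conjunction of clauses (disjunctions of literals) each of width at most $k$. $\mathrm{sat}_t(F)$ is the set of satisfying assignments of $F$ of Hamming weight exactly $t$. $F$ is $t$-admissible if it has no satisfying assignment of Hamming weight less than $t$. $S(n,t,k)$ is the maximum of $|\mathrm{sat}_t(F)|$ over all $t$-admissible $k$-CNF formulas $F$ on $n$ variables. *)

theory Defs
  imports Main
begin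

text \<open>Variables are natural numbers; a formula on n variables uses only variables 0..n-1.
  A literal is a pair (v, b): b = True means the un-negated variable x_v, b = False means its negation. An assignment of the n variables is identified with the set of variables set
  to true, so its Hamming weight is its cardinality.\<close>

type_synonym literal = "nat \<times> bool"
type_synonym clause = "literal set"
type_synonym cnf = "clause set"

definition sat_clause :: "nat set \<Rightarrow> clause \<Rightarrow> bool" where
  "sat_clause A C \<longleftrightarrow> (\<exists>(v, b)\<in>C. (v \<in> A) = b)"

definition sat_cnf :: "nat set \<Rightarrow> cnf \<Rightarrow> bool" where
  "sat_cnf A F \<longleftrightarrow> (\<forall>C\<in>F. sat_clause A C)"

definition cnf_on :: "nat \<Rightarrow> cnf \<Rightarrow> bool" where
  "cnf_on n F \<longleftrightarrow> finite F \<and> (\<forall>C\<in>F. finite C \<and> (\<forall>(v, b)\<in>C. v < n))"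

definition is_kcnf :: "nat \<Rightarrow> cnf \<Rightarrow> bool" where
  "is_kcnf k F \<longleftrightarrow> (\<forall>C\<in>F. card C \<le> k)"

definition sat_w :: "nat \<Rightarrow> nat \<Rightarrow> cnf \<Rightarrow> nat set set" where
  "sat_w n t F = {A. A \<subseteq> {0..<n} \<and> card A = t \<and> sat_cnf A F}"

definition admissible :: "nat \<Rightarrow> nat \<Rightarrow> cnf \<Rightarrow> bool" where
  "admissible n t F \<longleftrightarrow> (\<forall>A. A \<subseteq> {0..<n} \<and> card A < t \<longrightarrow> \<not> sat_cnf A F)"

definition S :: "nat \<Rightarrow> nat \<Rightarrow> nat \<Rightarrow> nat" where
  "S n t k = Max {card (sat_w n t F) | F. cnf_on n F \<and> is_kcnf k F \<and> admissible n t F}"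

end

theory Submission
  imports Defs "HOL-Library.Disjoint_Sets"
begin

text \<open>The upper bound is a branching argument. Let sat_ext B s be the satisfying
  assignments that extend a set B of true variables by s further ones. If no satisfying
  assignment of weight below |B| + s extends B, then B falsifies some clause C, every extension
  must switch on one of the at most k positive variables of C outside B, and induction on s gives
  at most k^s extensions. Equality forces C to be all-positive with exactly k variables outside B,
  every branch to be tight, and the branches to be pairwise disjoint. Recursing into the branch of
  some v in C yields t - 1 pairwise disjoint all-positive clauses of width k avoiding B and v;
  none of them can meet C in some u, for tightness would then produce an extension containing
  both u and v, lying in two disjoint branches. The formula consisting of t all-positive clauses
  on disjoint blocks of k variables attains k^t.\<close>

definition sat_ext :: "nat \<Rightarrow> cnf \<Rightarrow> nat set \<Rightarrow> nat \<Rightarrow> nat set set" where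
  "sat_ext n F B s = {A. B \<subseteq> A \<and> A \<subseteq> {0..<n} \<and> card A = card B + s \<and> sat_cnf A F}"

definition ext_admissible :: "nat \<Rightarrow> cnf \<Rightarrow> nat set \<Rightarrow> nat \<Rightarrow> bool" where
  "ext_admissible n F B s \<longleftrightarrow>
     (\<forall>A. B \<subseteq> A \<and> A \<subseteq> {0..<n} \<and> card A < card B + s \<longrightarrow> \<not> sat_cnf A F)"

definition pos_vars :: "clause \<Rightarrow> nat set" where
  "pos_vars C = {v. (v, True) \<in> C}"

definition pos_clause :: "nat set \<Rightarrow> clause" where
  "pos_clause V = (\<lambda>v. (v, True)) ` V"

lemma sat_ext_empty: "sat_ext n F {} t = sat_w n t F"
  unfolding sat_ext_def sat_w_def by auto

lemma ext_admissible_empty: "ext_admissible n F {} t = admissible n t F"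
  unfolding ext_admissible_def admissible_def by auto

lemma finite_sat_ext: "finite (sat_ext n F B s)"
  by (rule finite_subset[of _ "Pow {0..<n}"]) (auto simp: sat_ext_def)

lemma sat_ext_insert_subset:
  assumes "x \<notin> B" "finite B"
  shows "sat_ext n F (insert x B) s \<subseteq> sat_ext n F B (Suc s)"
  using assms by (auto simp: sat_ext_def)

lemma ext_admissible_insert:
  assumes "ext_admissible n F B (Suc s)" "x \<notin> B" "finite B"
  shows "ext_admissible n F (insert x B) s"
proof -
  have "card (insert x B) = Suc (card B)"
    using assms(2,3) by simp
  then show ?thesis
    using assms(1) unfolding ext_admissible_def by auto
qed

lemma ext_admissible_unsat_clause:
  assumes "ext_admissible n F B (Suc s)" "B \<subseteq> {0..<n}"
  obtains C where "C \<in> F" "\<not> sat_clause B C"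
  using assms unfolding ext_admissible_def sat_cnf_def by auto

lemma inj_on_pos_lit: "inj_on (\<lambda>v. (v, True)) V"
  by (auto simp: inj_on_def)

lemma card_pos_clause [simp]: "card (pos_clause V) = card V"
  unfolding pos_clause_def by (rule card_image[OF inj_on_pos_lit])

lemma pos_vars_pos_clause [simp]: "pos_vars (pos_clause V) = V"
  unfolding pos_vars_def pos_clause_def by auto

lemma pos_clause_pos_vars_subset: "pos_clause (pos_vars C - B) \<subseteq> C"
  unfolding pos_vars_def pos_clause_def by auto

lemma finite_pos_vars: "finite C \<Longrightarrow> finite (pos_vars C - B)"
proof (rule finite_subset)
  show "pos_vars C - B \<subseteq> fst ` C"
    unfolding pos_vars_def by (auto intro: rev_image_eqI)
qed simp

lemma card_pos_vars_le: "finite C \<Longrightarrow> card (pos_vars C - B) \<le> card C"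
  by (metis card_mono card_pos_clause pos_clause_pos_vars_subset)

lemma pos_vars_subset: "cnf_on n F \<Longrightarrow> C \<in> F \<Longrightarrow> pos_vars C \<subseteq> {0..<n}"
  unfolding cnf_on_def pos_vars_def by fastforce

lemma sat_ext_Suc_subset_UN:
  assumes "C \<in> F" "\<not> sat_clause B C" "finite B"
  shows "sat_ext n F B (Suc s) \<subseteq> (\<Union>x\<in>pos_vars C - B. sat_ext n F (insert x B) s)"
proof
  fix A assume A: "A \<in> sat_ext n F B (Suc s)"
  then have "sat_clause A C" "B \<subseteq> A"
    using assms(1) unfolding sat_ext_def sat_cnf_def by auto
  then obtain x b where xb: "(x, b) \<in> C" "(x \<in> A) = b"
    unfolding sat_clause_def by auto
  moreover have "(x \<in> B) \<noteq> b"
    using xb(1) assms(2) unfolding sat_clause_def by auto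
  ultimately have "x \<in> pos_vars C - B" "x \<in> A"
    using \<open>B \<subseteq> A\<close> unfolding pos_vars_def by auto
  moreover from A \<open>x \<in> A\<close> \<open>x \<in> pos_vars C - B\<close> have "A \<in> sat_ext n F (insert x B) s"
    using assms(3) unfolding sat_ext_def by auto
  ultimately show "A \<in> (\<Union>x\<in>pos_vars C - B. sat_ext n F (insert x B) s)" by blast
qed

lemma card_sat_ext_le:
  assumes "cnf_on n F" "is_kcnf k F" "B \<subseteq> {0..<n}" "ext_admissible n F B s"
  shows "card (sat_ext n F B s) \<le> k ^ s"
  using assms(3,4)
proof (induction s arbitrary: B)
  case 0
  have "A = B" if "A \<in> sat_ext n F B 0" for A
  proof -
    from that have "B \<subseteq> A" "A \<subseteq> {0..<n}" "card A = card B"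
      unfolding sat_ext_def by simp_all
    then show "A = B"
      by (metis card_subset_eq finite_atLeastLessThan finite_subset)
  qed
  then have "card (sat_ext n F B 0) \<le> card {B}"
    by (intro card_mono) auto
  then show ?case by simp
next
  case (Suc s)
  obtain C where C: "C \<in> F" "\<not> sat_clause B C"
    using ext_admissible_unsat_clause[OF Suc.prems(2,1)] .
  define P where "P = pos_vars C - B"
  have fB: "finite B" using Suc.prems(1) finite_subset by blast
  have fC: "finite C" "card C \<le> k"
    using assms(1,2) C(1) unfolding cnf_on_def is_kcnf_def by auto
  have "card (sat_ext n F B (Suc s)) \<le> card (\<Union>x\<in>P. sat_ext n F (insert x B) s)"
    using sat_ext_Suc_subset_UN[OF C fB] finite_pos_vars[OF fC(1)] finite_sat_ext
    unfolding P_def by (intro card_mono) auto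
  also have "\<dots> \<le> (\<Sum>x\<in>P. card (sat_ext n F (insert x B) s))"
    by (rule card_UN_le) (use finite_pos_vars[OF fC(1)] P_def in simp)
  also have "\<dots> \<le> (\<Sum>x\<in>P. k ^ s)"
  proof (rule sum_mono)
    fix x assume "x \<in> P"
    then have "x \<notin> B" "insert x B \<subseteq> {0..<n}"
      using pos_vars_subset[OF assms(1) C(1)] Suc.prems(1) P_def by auto
    then show "card (sat_ext n F (insert x B) s) \<le> k ^ s"
      using Suc.IH ext_admissible_insert[OF Suc.prems(2) _ fB] by blast
  qed
  also have "\<dots> = card P * k ^ s"
    by simp
  also have "\<dots> \<le> k ^ Suc s"
    using card_pos_vars_le[OF fC(1), of B] fC(2) unfolding P_def by simp
  finally show ?case .
qed

lemma card_UN_less_sum: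
  assumes "finite I" "\<forall>i\<in>I. finite (X i)"
    and "u \<in> I" "v \<in> I" "u \<noteq> v" "X u \<inter> X v \<noteq> {}"
  shows "card (\<Union>i\<in>I. X i) < (\<Sum>i\<in>I. card (X i))"
proof -
  let ?R = "I - {u, v}"
  have "(\<Union>i\<in>I. X i) = (X u \<union> X v) \<union> (\<Union>i\<in>?R. X i)"
    using assms(3,4) by blast
  then have "card (\<Union>i\<in>I. X i) \<le> card (X u \<union> X v) + card (\<Union>i\<in>?R. X i)"
    by (simp only: card_Un_le)
  also have "card (\<Union>i\<in>?R. X i) \<le> (\<Sum>i\<in>?R. card (X i))"
    using assms(1) by (intro card_UN_le) simp
  also have "card (X u \<union> X v) < card (X u) + card (X v)"
  proof -
    have "finite (X u)" "finite (X v)"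
      using assms(2-4) by auto
    moreover from this have "card (X u \<inter> X v) > 0"
      using assms(6) by (simp add: card_gt_0_iff)
    ultimately show ?thesis
      using card_Un_Int[of "X u" "X v"] by simp
  qed
  also have "card (X u) + card (X v) + (\<Sum>i\<in>?R. card (X i)) = (\<Sum>i\<in>I. card (X i))"
  proof -
    have "(\<Sum>i\<in>insert u (insert v ?R). card (X i))
        = card (X u) + card (X v) + (\<Sum>i\<in>?R. card (X i))"
      using assms(1,5) by simp
    moreover have "insert u (insert v ?R) = I"
      using assms(3,4) by blast
    ultimately show ?thesis by simp
  qed
  finally show ?thesis by simp
qed

lemma card_UN_tight:
  assumes "finite I" "card I \<le> k" "\<forall>i\<in>I. finite (X i)"
    and "\<forall>i\<in>I. card (X i) \<le> m" "m > 0" "k * m \<le> card (\<Union>i\<in>I. X i)"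
  shows "card I = k" "\<And>i. i \<in> I \<Longrightarrow> card (X i) = m" "disjoint_family_on X I"
proof -
  have sum_le: "(\<Sum>i\<in>I. card (X i)) \<le> card I * m"
    using sum_bounded_above[of I "\<lambda>i. card (X i)" m] assms(4) by simp
  have UN_le: "card (\<Union>i\<in>I. X i) \<le> (\<Sum>i\<in>I. card (X i))"
    using card_UN_le[OF assms(1)] .
  have "k * m \<le> card I * m"
    using assms(6) UN_le sum_le by linarith
  then show "card I = k"
    using assms(2,5) by simp
  with assms(6) UN_le sum_le have sums: "(\<Sum>i\<in>I. card (X i)) = (\<Sum>i\<in>I. m)"
    by simp
  show "card (X i) = m" if "i \<in> I" for i
    using sum_mono_inv[OF sums _ that assms(1)] assms(4) by blast
  show "disjoint_family_on X I"
    unfolding disjoint_family_on_def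
  proof (intro ballI impI)
    fix i j assume ij: "i \<in> I" "j \<in> I" "i \<noteq> j"
    show "X i \<inter> X j = {}"
    proof (rule ccontr)
      assume "X i \<inter> X j \<noteq> {}"
      with card_UN_less_sum[OF assms(1,3) ij]
      have "card (\<Union>i\<in>I. X i) < (\<Sum>i\<in>I. card (X i))" .
      moreover have "(\<Sum>i\<in>I. card (X i)) \<le> k * m"
        using sum_le \<open>card I = k\<close> by simp
      ultimately show False
        using assms(6) by linarith
    qed
  qed
qed

lemma tight_branching:
  assumes "cnf_on n F" "is_kcnf k F" "k \<ge> 1" "B \<subseteq> {0..<n}"
    and "ext_admissible n F B (Suc s)" "card (sat_ext n F B (Suc s)) = k ^ Suc s"
    and "C \<in> F" "\<not> sat_clause B C"
  defines "P \<equiv> pos_vars C - B"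
  shows "card P = k" "C = pos_clause P"
    and "\<And>x. x \<in> P \<Longrightarrow> card (sat_ext n F (insert x B) s) = k ^ s"
    and "disjoint_family_on (\<lambda>x. sat_ext n F (insert x B) s) P"
proof -
  have fB: "finite B" using assms(4) finite_subset by blast
  have fC: "finite C" "card C \<le> k"
    using assms(1,2,7) unfolding cnf_on_def is_kcnf_def by auto
  have fP: "finite P" and card_P_le: "card P \<le> k"
    using finite_pos_vars[OF fC(1)] card_pos_vars_le[OF fC(1)] fC(2) unfolding P_def
    by (auto intro: order_trans)
  have branch_le: "card (sat_ext n F (insert x B) s) \<le> k ^ s" if "x \<in> P" for x
  proof -
    have "x \<notin> B" "insert x B \<subseteq> {0..<n}"
      using that pos_vars_subset[OF assms(1,7)] assms(4) P_def by auto
    then show ?thesis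
      using card_sat_ext_le[OF assms(1,2)] ext_admissible_insert[OF assms(5) _ fB] by blast
  qed
  have "k * k ^ s = card (sat_ext n F B (Suc s))"
    using assms(6) by simp
  also have "\<dots> \<le> card (\<Union>x\<in>P. sat_ext n F (insert x B) s)"
    using sat_ext_Suc_subset_UN[OF assms(7,8) fB] fP finite_sat_ext
    unfolding P_def by (intro card_mono) auto
  finally have covered: "k * k ^ s \<le> card (\<Union>x\<in>P. sat_ext n F (insert x B) s)" .
  have kpos: "k ^ s > 0"
    using assms(3) by simp
  have "\<forall>x\<in>P. finite (sat_ext n F (insert x B) s)" "\<forall>x\<in>P. card (sat_ext n F (insert x B) s) \<le> k ^ s"
    using finite_sat_ext branch_le by blast+
  note tight = card_UN_tight[OF fP card_P_le this kpos covered]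
  show "card P = k"
    by (rule tight(1))
  show "card (sat_ext n F (insert x B) s) = k ^ s" if "x \<in> P" for x
    by (rule tight(2)[OF that])
  show "disjoint_family_on (\<lambda>x. sat_ext n F (insert x B) s) P"
    by (rule tight(3))
  have sub: "pos_clause P \<subseteq> C"
    unfolding P_def by (rule pos_clause_pos_vars_subset)
  moreover have "card (pos_clause P) = card C"
    using card_mono[OF fC(1) sub] fC(2) \<open>card P = k\<close> by simp
  ultimately show "C = pos_clause P"
    using card_subset_eq[OF fC(1)] by blast
qed

lemma tight_branching_pos_clause_disjoint:
  assumes "cnf_on n F" "is_kcnf k F" "k \<ge> 1" "B \<subseteq> {0..<n}"
    and "ext_admissible n F B (Suc (Suc s))" "card (sat_ext n F B (Suc (Suc s))) = k ^ Suc (Suc s)"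
    and "C \<in> F" "\<not> sat_clause B C" "v \<in> pos_vars C - B"
    and "pos_clause W \<in> F" "W \<inter> insert v B = {}"
  shows "W \<inter> (pos_vars C - B) = {}"
proof (rule ccontr)
  assume "W \<inter> (pos_vars C - B) \<noteq> {}"
  then obtain u where u: "u \<in> W" "u \<in> pos_vars C - B" by blast
  note tight = tight_branching[OF assms(1-8)]
  have fB: "finite B" using assms(4) finite_subset by blast
  have vB: "v \<notin> B" "insert v B \<subseteq> {0..<n}"
    using assms(9) pos_vars_subset[OF assms(1,7)] assms(4) by auto
  have "u \<noteq> v" "u \<notin> B"
    using assms(11) u(1) by auto
  have "\<not> sat_clause (insert v B) (pos_clause W)"
    using assms(11) unfolding pos_clause_def sat_clause_def by auto
  moreover have "pos_vars (pos_clause W) - insert v B = W"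
    using assms(11) by auto
  ultimately have "card (sat_ext n F (insert u (insert v B)) s) = k ^ s"
    using tight_branching(3)[OF assms(1-3) vB(2) ext_admissible_insert[OF assms(5) vB(1) fB]
        tight(3)[OF assms(9)] assms(10)] u(1) by simp
  then have "sat_ext n F (insert u (insert v B)) s \<noteq> {}"
    using assms(3) by (intro notI) simp
  then obtain A where A: "A \<in> sat_ext n F (insert u (insert v B)) s"
    by blast
  then have "A \<in> sat_ext n F (insert v B) (Suc s)" "A \<in> sat_ext n F (insert u B) (Suc s)"
    using sat_ext_insert_subset[of u "insert v B" n F s]
      sat_ext_insert_subset[of v "insert u B" n F s]
      fB vB(1) \<open>u \<noteq> v\<close> \<open>u \<notin> B\<close> by (auto simp: insert_commute)
  moreover have "sat_ext n F (insert v B) (Suc s) \<inter> sat_ext n F (insert u B) (Suc s) = {}"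
    using tight(4) assms(9) u(2) \<open>u \<noteq> v\<close> unfolding disjoint_family_on_def by blast
  ultimately show False by blast
qed

lemma tight_sat_ext_disjoint_pos_clauses:
  assumes "cnf_on n F" "is_kcnf k F" "k \<ge> 1"
  shows "B \<subseteq> {0..<n} \<Longrightarrow> ext_admissible n F B s \<Longrightarrow> card (sat_ext n F B s) = k ^ s \<Longrightarrow>
    \<exists>V :: nat \<Rightarrow> nat set.
      (\<forall>i<s. card (V i) = k \<and> pos_clause (V i) \<in> F \<and> V i \<inter> B = {}) \<and>
      (\<forall>i<s. \<forall>j<s. i \<noteq> j \<longrightarrow> V i \<inter> V j = {})"
proof (induction s arbitrary: B)
  case 0
  show ?case by simp
next
  case (Suc s)
  obtain C where C: "C \<in> F" "\<not> sat_clause B C"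
    using ext_admissible_unsat_clause[OF Suc.prems(2,1)] .
  define P where "P = pos_vars C - B"
  note tight = tight_branching[OF assms Suc.prems C, folded P_def]
  have fB: "finite B" using Suc.prems(1) finite_subset by blast
  obtain v where "v \<in> P"
    using tight(1) assms(3) by fastforce
  then have vB: "v \<notin> B" "insert v B \<subseteq> {0..<n}"
    using pos_vars_subset[OF assms(1) C(1)] Suc.prems(1) P_def by auto
  obtain V where V: "\<forall>i<s. card (V i) = k \<and> pos_clause (V i) \<in> F \<and> V i \<inter> insert v B = {}"
    "\<forall>i<s. \<forall>j<s. i \<noteq> j \<longrightarrow> V i \<inter> V j = {}"
    using Suc.IH[OF vB(2) ext_admissible_insert[OF Suc.prems(2) vB(1) fB] tight(3)[OF \<open>v \<in> P\<close>]]
    by blast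
  have V_P: "V i \<inter> P = {}" if "i < s" for i
  proof -
    obtain s' where s': "s = Suc s'" using \<open>i < s\<close> by (cases s) auto
    show ?thesis
      using tight_branching_pos_clause_disjoint[OF assms Suc.prems[unfolded s'] C]
        \<open>v \<in> P\<close> V(1) that unfolding P_def by blast
  qed
  define V' where "V' = (\<lambda>i. if i = 0 then P else V (i - 1))"
  show ?case
  proof (intro exI[of _ V'] conjI allI impI)
    fix i assume "i < Suc s"
    then show "card (V' i) = k" "pos_clause (V' i) \<in> F" "V' i \<inter> B = {}"
      using V(1) tight(1,2) C(1) unfolding V'_def P_def by auto
  next
    fix i j assume "i < Suc s" "j < Suc s" "i \<noteq> j"
    then show "V' i \<inter> V' j = {}"
      using V(2) V_P unfolding V'_def by (cases i; cases j) auto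
  qed
qed

definition block :: "nat \<Rightarrow> nat \<Rightarrow> nat set" where
  "block k i = {k * i..<k * i + k}"

definition block_cnf :: "nat \<Rightarrow> nat \<Rightarrow> cnf" where
  "block_cnf k t = (\<lambda>i. pos_clause (block k i)) ` {..<t}"

lemma div_of_mem_block: "x \<in> block k i \<Longrightarrow> x div k = i"
  unfolding block_def by (simp add: div_nat_eqI mult.commute)

lemma mem_block: "x < k \<Longrightarrow> k * i + x \<in> block k i"
  unfolding block_def by simp

lemma block_subset:
  assumes "i < t" "k * t \<le> n"
  shows "block k i \<subseteq> {0..<n}"
proof -
  have "k * Suc i \<le> k * t"
    using assms(1) by (intro mult_le_mono2) simp
  then show ?thesis
    using assms(2) unfolding block_def by auto
qed

lemma cnf_on_block_cnf:
  assumes "k * t \<le> n"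
  shows "cnf_on n (block_cnf k t)"
proof -
  have "finite C \<and> (\<forall>(v, b)\<in>C. v < n)" if C: "C \<in> block_cnf k t" for C
  proof -
    obtain i where i: "i < t" "C = pos_clause (block k i)"
      using C unfolding block_cnf_def by auto
    have "finite C"
      unfolding i(2) pos_clause_def block_def by simp
    moreover have "\<forall>(v, b)\<in>C. v < n"
      using block_subset[OF i(1) assms] unfolding i(2) pos_clause_def by auto
    ultimately show ?thesis ..
  qed
  moreover have "finite (block_cnf k t)"
    unfolding block_cnf_def by simp
  ultimately show ?thesis
    unfolding cnf_on_def by blast
qed

lemma is_kcnf_block_cnf: "is_kcnf k (block_cnf k t)"
  unfolding is_kcnf_def block_cnf_def block_def by auto

lemma admissible_block_cnf: "admissible n t (block_cnf k t)"
  unfolding admissible_def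
proof (intro allI impI notI)
  fix A assume A: "A \<subseteq> {0..<n} \<and> card A < t" and sat: "sat_cnf A (block_cnf k t)"
  have "{..<t} \<subseteq> (\<lambda>a. a div k) ` A"
  proof
    fix i assume "i \<in> {..<t}"
    then have "sat_clause A (pos_clause (block k i))"
      using sat unfolding sat_cnf_def block_cnf_def by auto
    then obtain a where "a \<in> A" "a \<in> block k i"
      unfolding sat_clause_def pos_clause_def by auto
    then show "i \<in> (\<lambda>a. a div k) ` A"
      using div_of_mem_block by force
  qed
  moreover have "finite A"
    using A finite_subset by blast
  ultimately have "card {..<t} \<le> card ((\<lambda>a. a div k) ` A)"
    by (intro card_mono) auto
  also have "\<dots> \<le> card A"
    using \<open>finite A\<close> by (rule card_image_le)
  finally show False
    using A by simp
qed

definition transversal :: "nat \<Rightarrow> nat \<Rightarrow> (nat \<Rightarrow> nat) \<Rightarrow> nat set" where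
  "transversal k t f = (\<lambda>i. k * i + f i) ` {..<t}"

lemma block_offset_eq:
  fixes i j k x y :: nat
  assumes "x < k" "y < k" "k * i + x = k * j + y"
  shows "i = j \<and> x = y"
proof -
  have "i = (k * i + x) div k" "j = (k * j + y) div k"
    using assms(1,2) by simp_all
  with assms(3) show ?thesis
    by simp
qed

lemma inj_on_transversal: "inj_on (transversal k t) (PiE {..<t} (\<lambda>_. {..<k}))"
proof (rule inj_onI)
  fix f g assume f: "f \<in> PiE {..<t} (\<lambda>_. {..<k})" and g: "g \<in> PiE {..<t} (\<lambda>_. {..<k})"
    and eq: "transversal k t f = transversal k t g"
  show "f = g"
  proof (rule PiE_ext[OF f g])
    fix i assume "i \<in> {..<t}"
    then obtain j where "j < t" "k * i + f i = k * j + g j"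
      using eq unfolding transversal_def by blast
    moreover have "f i < k" "g j < k"
      using f g \<open>i \<in> {..<t}\<close> \<open>j < t\<close> by (simp_all add: PiE_iff)
    ultimately show "f i = g i"
      using block_offset_eq by blast
  qed
qed

lemma transversal_mem_sat_w:
  assumes "k * t \<le> n" "f \<in> PiE {..<t} (\<lambda>_. {..<k})"
  shows "transversal k t f \<in> sat_w n t (block_cnf k t)"
proof -
  have f_less: "f i < k" if "i < t" for i
    using assms(2) that by (simp add: PiE_iff)
  have "inj_on (\<lambda>i. k * i + f i) {..<t}"
  proof (rule inj_onI)
    fix i j assume "i \<in> {..<t}" "j \<in> {..<t}" and eq: "k * i + f i = k * j + f j"
    then have "f i < k" "f j < k"
      using f_less by simp_all
    with eq show "i = j"
      using block_offset_eq by blast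
  qed
  then have "card (transversal k t f) = t"
    unfolding transversal_def by (simp add: card_image)
  moreover have "transversal k t f \<subseteq> {0..<n}"
    using mem_block[OF f_less] block_subset[OF _ assms(1)] unfolding transversal_def by blast
  moreover have "sat_clause (transversal k t f) (pos_clause (block k i))" if "i < t" for i
  proof -
    have "(k * i + f i, True) \<in> pos_clause (block k i)" "k * i + f i \<in> transversal k t f"
      using mem_block[OF f_less[OF that]] that unfolding transversal_def pos_clause_def by auto
    then show ?thesis
      unfolding sat_clause_def by auto
  qed
  ultimately show ?thesis
    unfolding sat_w_def sat_cnf_def block_cnf_def by auto
qed

lemma card_sat_w_block_cnf_ge:
  assumes "k * t \<le> n"
  shows "k ^ t \<le> card (sat_w n t (block_cnf k t))"
proof -
  let ?choices = "PiE {..<t} (\<lambda>_. {..<k})"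
  have "k ^ t = card (transversal k t ` ?choices)"
    using card_image[OF inj_on_transversal] by (simp add: card_PiE)
  also have "\<dots> \<le> card (sat_w n t (block_cnf k t))"
    using transversal_mem_sat_w[OF assms] finite_sat_ext[of n "block_cnf k t" "{}" t]
    by (intro card_mono) (simp_all add: sat_ext_empty image_subset_iff)
  finally show ?thesis .
qed

theorem theorem1:
  fixes n t k :: nat
  assumes "k \<ge> 1" and "n \<ge> k * t"
  shows "S n t k = k ^ t \<and>
    (\<forall>F. cnf_on n F \<and> is_kcnf k F \<and> admissible n t F \<and> card (sat_w n t F) = k ^ t \<longrightarrow>
      (\<exists>V :: nat \<Rightarrow> nat set.
         (\<forall>i<t. card (V i) = k \<and> (\<lambda>v. (v, True)) ` V i \<in> F) \<and>
         (\<forall>i<t. \<forall>j<t. i \<noteq> j \<longrightarrow> V i \<inter> V j = {})))"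
proof
  let ?M = "{card (sat_w n t F) | F. cnf_on n F \<and> is_kcnf k F \<and> admissible n t F}"
  have upper: "m \<le> k ^ t" if "m \<in> ?M" for m
    using that card_sat_ext_le[of n _ k "{}" t] by (auto simp: sat_ext_empty ext_admissible_empty)
  have "card (sat_w n t (block_cnf k t)) \<in> ?M"
    using cnf_on_block_cnf[OF assms(2)] is_kcnf_block_cnf admissible_block_cnf by blast
  moreover from this have "card (sat_w n t (block_cnf k t)) = k ^ t"
    using upper card_sat_w_block_cnf_ge[OF assms(2)] le_antisym by blast
  ultimately have "k ^ t \<in> ?M"
    by simp
  moreover have "finite ?M"
    using upper by (intro finite_subset[OF _ finite_atMost]) blast
  ultimately show "S n t k = k ^ t"
    unfolding S_def using Max_eqI upper by blast
next
  show "\<forall>F. cnf_on n F \<and> is_kcnf k F \<and> admissible n t F \<and> card (sat_w n t F) = k ^ t \<longrightarrow>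
      (\<exists>V :: nat \<Rightarrow> nat set.
         (\<forall>i<t. card (V i) = k \<and> (\<lambda>v. (v, True)) ` V i \<in> F) \<and>
         (\<forall>i<t. \<forall>j<t. i \<noteq> j \<longrightarrow> V i \<inter> V j = {}))"
  proof (intro allI impI)
    fix F assume F: "cnf_on n F \<and> is_kcnf k F \<and> admissible n t F \<and> card (sat_w n t F) = k ^ t"
    then obtain V where
      "\<forall>i<t. card (V i) = k \<and> pos_clause (V i) \<in> F \<and> V i \<inter> {} = {}"
      "\<forall>i<t. \<forall>j<t. i \<noteq> j \<longrightarrow> V i \<inter> V j = {}"
      using tight_sat_ext_disjoint_pos_clauses[of n F k "{}" t] assms(1)
      by (auto simp: sat_ext_empty ext_admissible_empty)
    then show "\<exists>V :: nat \<Rightarrow> nat set.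
         (\<forall>i<t. card (V i) = k \<and> (\<lambda>v. (v, True)) ` V i \<in> F) \<and>
         (\<forall>i<t. \<forall>j<t. i \<noteq> j \<longrightarrow> V i \<inter> V j = {})"
      unfolding pos_clause_def by blast
  qed
qed

end
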